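(* Let $G=(V,E)$ be a Generalized Bartlett graph on $V=\{1,\dots,r\}$ for which the ordering by labels is a Generalized Bartlett ordering. Let $0=p_0<p_1<\dots<p_r$ be integers and for each $i$ let $G_i=(V_i,E_i)$ be a Generalized Bartlett graph on $V_i=\{p_{i-1}+1,\dots,p_i\}$ for which the ordering by labels is a Generalized Bartlett ordering. Define the expanded graph $\widetilde G=(\widetilde V,\widetilde E)$ by $\widetilde V=V_1\cup\dots\cup V_r=\{1,\dots,p_r\}$ and $\{k,l\}\in\widetilde E$ iff either $\{k,l\}\in E_i$ for some $i$, or $k=p_i$, $l=p_j$ for some $i\ne j$ with $\{i,j\}\in E$. Then $\widetilde G$ is a Generalized Bartlett graph.
   Context: For a graph $H=(W,F)$ with $|W|=m$ and an ordering $\sigma:W\to\{1,\dots,m\}$ (bijection), define $F^\sigma_0=F$ and for $i=1,\dots,m-2$, $F^\sigma_i=F^\sigma_{i-1}\cup\{\{u,v\}:u\ne v,\sigma(u)>i,\sigma(v)>i,\{u,\sigma^{-1}(i)\},\{v,\sigma^{-1}(i)\}\in F^\sigma_{i-1}\}$; let $D^\sigma(F)=F^\sigma_{m-2}$. $\sigma$ is a Generalized Bartlett ordering of $H$ if there are no $u,v,w\in W$ with $\{u,v\},\{v,w\},\{u,w\}\notin F$ but all three in $D^\sigma(F)$; $H$ is a Generalized Bartlett graph if such an ordering exists. For a graph on a set of integers, "the ordering by labels" means the order-preserving bijection onto $\{1,\dots,m\}$. *)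

theory Defs
  imports Main
begin

definition simple_graph :: "'a set \<Rightarrow> 'a set set \<Rightarrow> bool" where
  "simple_graph W F \<longleftrightarrow> finite W \<and>
     (\<forall>e\<in>F. \<exists>u v. u \<noteq> v \<and> u \<in> W \<and> v \<in> W \<and> e = {u, v})"

definition fill_step :: "'a set \<Rightarrow> ('a \<Rightarrow> nat) \<Rightarrow> nat \<Rightarrow> 'a set set \<Rightarrow> 'a set set" where
  "fill_step W \<sigma> i F = F \<union> {{u, v} | u v. u \<in> W \<and> v \<in> W \<and> u \<noteq> v \<and> \<sigma> u > i \<and> \<sigma> v > i \<and>
       {u, inv_into W \<sigma> i} \<in> F \<and> {v, inv_into W \<sigma> i} \<in> F}"

fun fill_seq :: "'a set \<Rightarrow> ('a \<Rightarrow> nat) \<Rightarrow> 'a set set \<Rightarrow> nat \<Rightarrow> 'a set set" where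
  "fill_seq W \<sigma> F 0 = F"
| "fill_seq W \<sigma> F (Suc i) = fill_step W \<sigma> (Suc i) (fill_seq W \<sigma> F i)"

definition fillD :: "'a set \<Rightarrow> ('a \<Rightarrow> nat) \<Rightarrow> 'a set set \<Rightarrow> 'a set set" where
  "fillD W \<sigma> F = fill_seq W \<sigma> F (card W - 2)"

definition GB_ordering :: "'a set \<Rightarrow> 'a set set \<Rightarrow> ('a \<Rightarrow> nat) \<Rightarrow> bool" where
  "GB_ordering W F \<sigma> \<longleftrightarrow> bij_betw \<sigma> W {1..card W} \<and>
     \<not> (\<exists>u\<in>W. \<exists>v\<in>W. \<exists>w\<in>W. {u,v} \<notin> F \<and> {v,w} \<notin> F \<and> {u,w} \<notin> F \<and>
          {u,v} \<in> fillD W \<sigma> F \<and> {v,w} \<in> fillD W \<sigma> F \<and> {u,w} \<in> fillD W \<sigma> F)"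

definition GB_graph :: "'a set \<Rightarrow> 'a set set \<Rightarrow> bool" where
  "GB_graph W F \<longleftrightarrow> simple_graph W F \<and> (\<exists>\<sigma>. GB_ordering W F \<sigma>)"

text \<open>The ordering by labels: order-preserving bijection of a finite set of naturals onto {1..m}.\<close>
definition label_ord :: "nat set \<Rightarrow> nat \<Rightarrow> nat" where
  "label_ord W x = card {y \<in> W. y \<le> x}"

definition expanded_edges :: "nat \<Rightarrow> nat set set \<Rightarrow> (nat \<Rightarrow> nat) \<Rightarrow> (nat \<Rightarrow> nat set set) \<Rightarrow> nat set set" where
  "expanded_edges r E p Es =
     {e. (\<exists>i\<in>{1..r}. e \<in> Es i) \<or> (\<exists>i j. i \<noteq> j \<and> {i, j} \<in> E \<and> e = {p i, p j})}"

end

theory Submission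
  imports Defs
begin

text \<open>
  Order the expanded graph by labels. Its fill never leaves the set consisting of the fills of
  the parts \<open>G\<^sub>i\<close> together with the edges \<open>{p\<^sub>a, p\<^sub>b}\<close> for \<open>{a, b}\<close> in the fill of \<open>G\<close>: this set
  is closed under eliminating a vertex below two neighbours, because the port \<open>p\<^sub>i\<close> is the last
  vertex of its part, so a vertex of \<open>V\<^sub>i\<close> other than \<open>p\<^sub>i\<close> is only ever joined to vertices of
  \<open>V\<^sub>i\<close>. A new triangle of this set either has two, and then three, vertices in one part, giving a
  new triangle in the fill of that part, or consists of three ports, giving one in the fill
  of \<open>G\<close>.
\<close>

lemma fill_step_mono: "F \<subseteq> F' \<Longrightarrow> fill_step W \<sigma> i F \<subseteq> fill_step W \<sigma> i F'"
  unfolding fill_step_def by blast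

lemma fill_seq_mono: "m \<le> n \<Longrightarrow> fill_seq W \<sigma> F m \<subseteq> fill_seq W \<sigma> F n"
  by (induction n) (auto simp: fill_step_def le_Suc_eq)

lemma fill_seq_subset:
  assumes "F \<subseteq> B" and "\<And>i. 0 < i \<Longrightarrow> fill_step W \<sigma> i B \<subseteq> B"
  shows "fill_seq W \<sigma> F n \<subseteq> B"
proof (induction n)
  case (Suc n)
  then show ?case
    using fill_step_mono assms(2) by (metis fill_seq.simps(2) order_trans zero_less_Suc)
qed (simp add: assms(1))

lemma fill_seq_edges:
  assumes "simple_graph W F" and "e \<in> fill_seq W \<sigma> F n"
  shows "\<exists>u v. u \<noteq> v \<and> u \<in> W \<and> v \<in> W \<and> e = {u, v}"
  using assms(2)
proof (induction n arbitrary: e)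
  case 0
  then show ?case using assms(1) unfolding simple_graph_def by simp
next
  case (Suc n)
  then show ?case by (auto simp: fill_step_def)
qed

text \<open>Step \<open>i\<close> only adds edges between vertices above \<open>i\<close>, so an edge at \<open>y\<close> is already present
  after step \<open>\<sigma> y - 1\<close>.\<close>
lemma fill_seq_edge_stable:
  "e \<in> fill_seq W \<sigma> F n \<Longrightarrow> y \<in> e \<Longrightarrow> e \<in> fill_seq W \<sigma> F (min n (\<sigma> y - 1))"
proof (induction n)
  case (Suc n)
  show ?case
  proof (cases "e \<in> fill_seq W \<sigma> F n")
    case True
    moreover have "min n (\<sigma> y - 1) \<le> min (Suc n) (\<sigma> y - 1)" by simp
    ultimately show ?thesis using Suc fill_seq_mono by blast
  next
    case False
    with Suc.prems have "Suc n < \<sigma> y" unfolding fill_seq.simps fill_step_def by auto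
    with Suc.prems show ?thesis by simp
  qed
qed simp

lemma fillD_closed:
  assumes bij: "bij_betw \<sigma> W {1..card W}"
    and W: "x \<in> W" "u \<in> W" "v \<in> W" and "u \<noteq> v"
    and less: "\<sigma> x < \<sigma> u" "\<sigma> x < \<sigma> v"
    and edges: "{u, x} \<in> fillD W \<sigma> F" "{v, x} \<in> fillD W \<sigma> F"
  shows "{u, v} \<in> fillD W \<sigma> F"
proof -
  have inj: "inj_on \<sigma> W" using bij by (rule bij_betw_imp_inj_on)
  have range: "\<sigma> y \<in> {1..card W}" if "y \<in> W" for y using bij_betw_apply[OF bij that] .
  have "\<sigma> u \<noteq> \<sigma> v" using inj W \<open>u \<noteq> v\<close> by (meson inj_on_eq_iff)
  moreover have "\<sigma> u \<le> card W" "\<sigma> v \<le> card W" "1 \<le> \<sigma> x" using range W by auto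
  ultimately have "1 \<le> \<sigma> x" "\<sigma> x \<le> card W - 2" using less by arith+
  then obtain j where j: "\<sigma> x = Suc j" and j_le: "Suc j \<le> card W - 2"
    using not0_implies_Suc by fastforce
  then have "min (card W - 2) (\<sigma> x - 1) = j" by simp
  then have "{u, x} \<in> fill_seq W \<sigma> F j" "{v, x} \<in> fill_seq W \<sigma> F j"
    using fill_seq_edge_stable[of _ W \<sigma> F "card W - 2" x] edges unfolding fillD_def by auto
  moreover have "inv_into W \<sigma> (Suc j) = x" using inv_into_f_f[OF inj W(1)] j by simp
  ultimately have "{u, v} \<in> fill_seq W \<sigma> F (Suc j)"
    using W \<open>u \<noteq> v\<close> less j unfolding fill_seq.simps fill_step_def by auto
  then show ?thesis unfolding fillD_def using fill_seq_mono[OF j_le] by blast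
qed

lemma fill_seq_id_subset:
  assumes "F \<subseteq> B"
    and closed: "\<And>u v k. u \<noteq> v \<Longrightarrow> k < u \<Longrightarrow> k < v \<Longrightarrow> {u, k} \<in> B \<Longrightarrow> {v, k} \<in> B \<Longrightarrow> {u, v} \<in> B"
  shows "fill_seq {1..N} id F n \<subseteq> B"
proof (rule fill_seq_subset[OF assms(1)])
  fix i :: nat assume "0 < i"
  show "fill_step {1..N} id i B \<subseteq> B"
  proof
    fix e assume "e \<in> fill_step {1..N} id i B"
    then consider "e \<in> B" | u v where "e = {u, v}" "u \<in> {1..N}" "u \<noteq> v" "i < u" "i < v"
        "{u, inv_into {1..N} id i} \<in> B" "{v, inv_into {1..N} id i} \<in> B"
      unfolding fill_step_def by auto
    then show "e \<in> B"
    proof cases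
      case 2
      with \<open>0 < i\<close> have "i \<in> {1..N}" by auto
      then have "inv_into {1..N} id i = i"
        using inv_into_f_f[OF inj_on_id] by (metis id_apply)
      with 2 closed show ?thesis by simp
    qed
  qed
qed

lemma label_ord_atLeastAtMost: "x \<in> {a+1..b} \<Longrightarrow> label_ord {a+1..b} x = x - a"
proof -
  assume "x \<in> {a+1..b}"
  then have "{y \<in> {a+1..b}. y \<le> x} = {a+1..x}" by auto
  then show ?thesis by (simp add: label_ord_def)
qed

locale expansion =
  fixes r :: nat and E :: "nat set set" and p :: "nat \<Rightarrow> nat" and Es :: "nat \<Rightarrow> nat set set"
  assumes G: "GB_graph {1..r} E"
    and G_ord: "GB_ordering {1..r} E (label_ord {1..r})"
    and p0: "p 0 = 0"
    and p_mono: "\<And>i. i < r \<Longrightarrow> p i < p (Suc i)"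
    and Gi: "\<And>i. i \<in> {1..r} \<Longrightarrow> GB_graph {p (i - 1) + 1..p i} (Es i)"
    and Gi_ord: "\<And>i. i \<in> {1..r} \<Longrightarrow>
                   GB_ordering {p (i - 1) + 1..p i} (Es i) (label_ord {p (i - 1) + 1..p i})"
begin

abbreviation Et :: "nat set set" where "Et \<equiv> expanded_edges r E p Es"

definition V :: "nat \<Rightarrow> nat set" where "V i = {p (i - 1) + 1..p i}"

definition D :: "nat \<Rightarrow> nat set set" where "D i = fillD (V i) (label_ord (V i)) (Es i)"

definition DG :: "nat set set" where "DG = fillD {1..r} (label_ord {1..r}) E"

definition fill_bound :: "nat set set" where
  "fill_bound = (\<Union>i\<in>{1..r}. D i) \<union>
     {{p a, p b} | a b. a \<in> {1..r} \<and> b \<in> {1..r} \<and> a \<noteq> b \<and> {a, b} \<in> DG}"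

lemma p_less: "i < j \<Longrightarrow> j \<le> r \<Longrightarrow> p i < p j"
  by (rule lift_Suc_mono_less_ivl[of "{..<r}"]) (use p_mono in auto)

lemma p_le: "i \<le> j \<Longrightarrow> j \<le> r \<Longrightarrow> p i \<le> p j"
  using p_less[of i j] by (cases "i = j") auto

lemma p_less_iff: "a \<le> r \<Longrightarrow> b \<le> r \<Longrightarrow> p a < p b \<longleftrightarrow> a < b"
  using p_less[of a b] p_le[of b a] by (meson leD not_le)

lemma p_inj: "a \<le> r \<Longrightarrow> b \<le> r \<Longrightarrow> p a = p b \<Longrightarrow> a = b"
  using p_less_iff[of a b] p_less_iff[of b a] by (cases a b rule: linorder_cases) auto

lemma p_in_range: "a \<in> {1..r} \<Longrightarrow> p a \<in> {1..p r}"
  using p_less[of 0 a] p_le[of a r] p0 by auto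

lemma V_subset: "i \<in> {1..r} \<Longrightarrow> V i \<subseteq> {1..p r}"
  using p_le[of i r] unfolding V_def by auto

lemma V_le_p: "x \<in> V i \<Longrightarrow> x \<le> p i"
  unfolding V_def by simp

lemma V_disjoint:
  assumes "i \<in> {1..r}" "j \<in> {1..r}" "x \<in> V i" "x \<in> V j"
  shows "i = j"
proof -
  have False if "i \<in> {1..r}" "j \<in> {1..r}" "x \<in> V i" "x \<in> V j" "i < j" for i j
  proof -
    have "p i \<le> p (j - 1)" using that by (intro p_le) auto
    then show False using that unfolding V_def by auto
  qed
  then show ?thesis using assms by (metis linorder_cases)
qed

lemma p_in_V:
  assumes "a \<in> {1..r}" "i \<in> {1..r}" "p a \<in> V i"
  shows "a = i"
proof (rule linorder_cases[of a i])
  assume "a < i"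
  then have "p a \<le> p (i - 1)" using assms by (intro p_le) auto
  then show ?thesis using assms unfolding V_def by auto
next
  assume "i < a"
  then have "p i < p a" using assms by (intro p_less) auto
  then show ?thesis using assms unfolding V_def by auto
qed

lemma label_ord_V: "x \<in> V i \<Longrightarrow> label_ord (V i) x = x - p (i - 1)"
  unfolding V_def by (rule label_ord_atLeastAtMost)

lemma label_ord_G: "x \<in> {1..r} \<Longrightarrow> label_ord {1..r} x = x"
  using label_ord_atLeastAtMost[of x 0 r] by simp

lemma simple_graph_V: "i \<in> {1..r} \<Longrightarrow> simple_graph (V i) (Es i)"
  using Gi unfolding V_def GB_graph_def by blast

lemma GB_ordering_V: "i \<in> {1..r} \<Longrightarrow> GB_ordering (V i) (Es i) (label_ord (V i))"
  using Gi_ord unfolding V_def by blast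

lemma E_edge_vertices:
  assumes "{a, b} \<in> E"
  shows "a \<in> {1..r}" "b \<in> {1..r}"
proof -
  obtain x y where "x \<in> {1..r}" "y \<in> {1..r}" "{a, b} = {x, y}"
    using G assms unfolding GB_graph_def simple_graph_def by blast
  then show "a \<in> {1..r}" "b \<in> {1..r}" by (auto simp: doubleton_eq_iff)
qed

lemma fill_bound_cases:
  assumes "{x, y} \<in> fill_bound"
  obtains (part) i where "i \<in> {1..r}" "x \<in> V i" "y \<in> V i" "{x, y} \<in> D i"
    | (port) a b where "a \<in> {1..r}" "b \<in> {1..r}" "a \<noteq> b" "{a, b} \<in> DG" "x = p a" "y = p b"
  using assms unfolding fill_bound_def
proof (elim UnE UN_E CollectE exE conjE)
  fix i assume "i \<in> {1..r}" "{x, y} \<in> D i"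
  moreover from this obtain u v where "u \<in> V i" "v \<in> V i" "{x, y} = {u, v}"
    using fill_seq_edges[OF simple_graph_V] unfolding D_def fillD_def by blast
  ultimately show thesis using part by (auto simp: doubleton_eq_iff insert_commute)
next
  fix a b assume "{x, y} = {p a, p b}" "a \<in> {1..r}" "b \<in> {1..r}" "a \<noteq> b" "{a, b} \<in> DG"
  then show thesis using port by (auto simp: doubleton_eq_iff insert_commute)
qed

lemma fill_bound_neq:
  assumes "{x, y} \<in> fill_bound"
  shows "x \<noteq> y"
  using assms
proof (cases rule: fill_bound_cases)
  case (part i)
  then show ?thesis
    using fill_seq_edges[OF simple_graph_V] unfolding D_def fillD_def
    by (metis doubleton_eq_iff insert_absorb2)
qed (use p_inj in auto)

lemma fill_bound_leaving_V:
  assumes "{x, y} \<in> fill_bound" "i \<in> {1..r}" "x \<in> V i" "y \<notin> V i"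
  shows "x = p i"
  using assms(1)
proof (cases rule: fill_bound_cases)
  case (part j)
  then show ?thesis using V_disjoint assms by blast
qed (use p_in_V assms in blast)

lemma fill_bound_within_V:
  assumes "{x, y} \<in> fill_bound" "i \<in> {1..r}" "x \<in> V i" "y \<in> V i"
  shows "{x, y} \<in> D i"
  using assms(1)
proof (cases rule: fill_bound_cases)
  case (part j)
  then show ?thesis using V_disjoint assms by blast
next
  case (port a b)
  then show ?thesis using p_in_V assms by blast
qed

lemma fill_bound_closed:
  assumes "u \<noteq> v" "k < u" "k < v" "{u, k} \<in> fill_bound" "{v, k} \<in> fill_bound"
  shows "{u, v} \<in> fill_bound"
proof (cases "\<exists>i\<in>{1..r}. u \<in> V i \<and> v \<in> V i \<and> k \<in> V i")
  case True
  then obtain i where i: "i \<in> {1..r}" "u \<in> V i" "v \<in> V i" "k \<in> V i" by blast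
  then have "p (i - 1) < k" unfolding V_def by simp
  with i assms(2,3) have less:
    "label_ord (V i) k < label_ord (V i) u" "label_ord (V i) k < label_ord (V i) v"
    using label_ord_V by auto
  have edges: "{u, k} \<in> D i" "{v, k} \<in> D i" using fill_bound_within_V assms(4,5) i by blast+
  have "bij_betw (label_ord (V i)) (V i) {1..card (V i)}"
    using GB_ordering_V[OF i(1)] unfolding GB_ordering_def by blast
  from fillD_closed[OF this i(4,2,3) assms(1) less edges[unfolded D_def]]
  have "{u, v} \<in> D i" unfolding D_def .
  then show ?thesis unfolding fill_bound_def using i(1) by blast
next
  case False
  have port: "\<exists>a c. a \<in> {1..r} \<and> c \<in> {1..r} \<and> {a, c} \<in> DG \<and> x = p a \<and> k = p c"
    if "{x, k} \<in> fill_bound" "{k, y} \<in> fill_bound" "k < x" "{x, y} = {u, v}" for x y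
    using that(1)
  proof (cases rule: fill_bound_cases)
    case (part i)
    with False that(4) have "y \<notin> V i" by (auto simp: doubleton_eq_iff)
    with part that(2) have "k = p i" using fill_bound_leaving_V by blast
    then show ?thesis using V_le_p[OF part(2)] that(3) by simp
  qed blast
  have "{k, v} \<in> fill_bound" "{k, u} \<in> fill_bound" "{v, u} = {u, v}"
    using assms(4,5) by (simp_all add: insert_commute)
  with port[of u v] port[of v u] assms obtain a c a' c' where
    ports: "a \<in> {1..r}" "c \<in> {1..r}" "{a, c} \<in> DG" "u = p a" "k = p c"
      "a' \<in> {1..r}" "c' \<in> {1..r}" "{a', c'} \<in> DG" "v = p a'" "k = p c'"
    by blast
  then have "c' = c" using p_inj[of c' c] by simp
  have less: "c < a" "c < a'" using ports assms(2,3) p_less_iff by auto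
  have "a \<noteq> a'" using ports assms(1) by auto
  have "bij_betw (label_ord {1..r}) {1..r} {1..card {1..r}}"
    using G_ord unfolding GB_ordering_def by blast
  from fillD_closed[OF this ports(2,1,6) \<open>a \<noteq> a'\<close>] less ports(3,8) \<open>c' = c\<close>
  have "{a, a'} \<in> DG"
    using label_ord_G ports(1,2,6) unfolding DG_def by (simp add: insert_commute)
  then show ?thesis unfolding fill_bound_def using ports \<open>a \<noteq> a'\<close> by blast
qed

lemma Et_subset_fill_bound: "Et \<subseteq> fill_bound"
proof
  fix e assume "e \<in> Et"
  then consider (part) i where "i \<in> {1..r}" "e \<in> Es i"
    | (port) a b where "a \<noteq> b" "{a, b} \<in> E" "e = {p a, p b}"
    unfolding expanded_edges_def by blast
  then show "e \<in> fill_bound"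
  proof cases
    case part
    then have "e \<in> D i" unfolding D_def fillD_def using fill_seq_mono[of 0] by fastforce
    then show ?thesis unfolding fill_bound_def using part by blast
  next
    case port
    then have "a \<in> {1..r}" "b \<in> {1..r}" using E_edge_vertices by blast+
    moreover have "{a, b} \<in> DG" unfolding DG_def fillD_def using fill_seq_mono[of 0] port by fastforce
    ultimately show ?thesis unfolding fill_bound_def using port by blast
  qed
qed

lemma fillD_Et_subset: "fillD {1..p r} id Et \<subseteq> fill_bound"
  unfolding fillD_def by (rule fill_seq_id_subset[OF Et_subset_fill_bound fill_bound_closed])

lemma fill_bound_triangle_edge_ports:
  assumes "{x, y} \<in> fill_bound" "{x, z} \<in> fill_bound" "{y, z} \<in> fill_bound" "x \<noteq> y"
    and "\<not> (\<exists>i\<in>{1..r}. x \<in> V i \<and> y \<in> V i \<and> z \<in> V i)"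
  obtains a b where "a \<in> {1..r}" "b \<in> {1..r}" "{a, b} \<in> DG" "x = p a" "y = p b"
  using assms(1)
proof (cases rule: fill_bound_cases)
  case (part i)
  then show thesis
    using fill_bound_leaving_V[of x z i] fill_bound_leaving_V[of y z i] assms by auto
qed

lemma no_new_triangle_V:
  assumes "i \<in> {1..r}" "u \<in> V i" "v \<in> V i" "w \<in> V i"
    and "{u, v} \<in> fill_bound" "{v, w} \<in> fill_bound" "{u, w} \<in> fill_bound"
    and "{u, v} \<notin> Et" "{v, w} \<notin> Et" "{u, w} \<notin> Et"
  shows False
proof -
  have "{u, v} \<in> D i" "{v, w} \<in> D i" "{u, w} \<in> D i"
    using fill_bound_within_V assms by blast+
  moreover have "Es i \<subseteq> Et" using assms(1) unfolding expanded_edges_def by blast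
  ultimately show False
    using GB_ordering_V[OF assms(1)] assms(2-4,8-10) unfolding GB_ordering_def D_def by blast
qed

lemma fill_bound_no_new_triangle:
  assumes uv: "{u, v} \<in> fill_bound" and vw: "{v, w} \<in> fill_bound" and uw: "{u, w} \<in> fill_bound"
    and new: "{u, v} \<notin> Et" "{v, w} \<notin> Et" "{u, w} \<notin> Et"
  shows False
proof (cases "\<exists>i\<in>{1..r}. u \<in> V i \<and> v \<in> V i \<and> w \<in> V i")
  case True
  then show False using no_new_triangle_V assms by blast
next
  case False
  have neq: "u \<noteq> v" "v \<noteq> w" "u \<noteq> w" using fill_bound_neq uv vw uw by blast+
  have vu: "{v, u} \<in> fill_bound" and wu: "{w, u} \<in> fill_bound" and wv: "{w, v} \<in> fill_bound"
    using uv uw vw by (simp_all add: insert_commute)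
  obtain a b where ab: "a \<in> {1..r}" "b \<in> {1..r}" "{a, b} \<in> DG" "u = p a" "v = p b"
    using fill_bound_triangle_edge_ports[OF uv uw vw neq(1)] False by blast
  obtain b' c where bc: "b' \<in> {1..r}" "c \<in> {1..r}" "{b', c} \<in> DG" "v = p b'" "w = p c"
    using fill_bound_triangle_edge_ports[OF vw vu wu neq(2)] False by blast
  obtain a' c' where ac: "a' \<in> {1..r}" "c' \<in> {1..r}" "{a', c'} \<in> DG" "u = p a'" "w = p c'"
    using fill_bound_triangle_edge_ports[OF uw uv wv neq(3)] False by blast
  have "b' = b" "a' = a" "c' = c" using p_inj ab bc ac by auto
  moreover have "{p x, p y} \<in> Et" if "{x, y} \<in> E" "x \<noteq> y" for x y
    using that unfolding expanded_edges_def by blast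
  ultimately have "{a, b} \<notin> E" "{b, c} \<notin> E" "{a, c} \<notin> E"
    using new neq ab bc ac by auto
  with G_ord ab bc ac \<open>b' = b\<close> \<open>a' = a\<close> \<open>c' = c\<close> show False
    unfolding GB_ordering_def DG_def by blast
qed

lemma simple_graph_expanded: "simple_graph {1..p r} Et"
  unfolding simple_graph_def
proof (intro conjI ballI)
  fix e assume "e \<in> Et"
  then consider (part) i where "i \<in> {1..r}" "e \<in> Es i"
    | (port) a b where "a \<noteq> b" "{a, b} \<in> E" "e = {p a, p b}"
    unfolding expanded_edges_def by blast
  then show "\<exists>u v. u \<noteq> v \<and> u \<in> {1..p r} \<and> v \<in> {1..p r} \<and> e = {u, v}"
  proof cases
    case part
    then obtain u v where "u \<noteq> v" "u \<in> V i" "v \<in> V i" "e = {u, v}"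
      using simple_graph_V unfolding simple_graph_def by blast
    then show ?thesis using V_subset[OF part(1)] by blast
  next
    case port
    then have "a \<in> {1..r}" "b \<in> {1..r}" using E_edge_vertices by blast+
    then have "p a \<in> {1..p r}" "p b \<in> {1..p r}" "p a \<noteq> p b"
      using p_in_range p_inj port(1) by auto
    then show ?thesis using port(3) by blast
  qed
qed simp

lemma GB_graph_expanded: "GB_graph {1..p r} Et"
proof -
  have "bij_betw id {1..p r} {1..card {1..p r}}" by simp
  then have "GB_ordering {1..p r} Et id"
    unfolding GB_ordering_def using fill_bound_no_new_triangle subsetD[OF fillD_Et_subset] by blast
  then show ?thesis unfolding GB_graph_def using simple_graph_expanded by blast
qed

end

theorem theorem6:
  fixes r :: nat and E :: "nat set set" and p :: "nat \<Rightarrow> nat" and Es :: "nat \<Rightarrow> nat set set"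
  assumes G: "GB_graph {1..r} E"
    and G_ord: "GB_ordering {1..r} E (label_ord {1..r})"
    and p0: "p 0 = 0"
    and p_mono: "\<And>i. i < r \<Longrightarrow> p i < p (Suc i)"
    and Gi: "\<And>i. i \<in> {1..r} \<Longrightarrow> GB_graph {p (i - 1) + 1..p i} (Es i)"
    and Gi_ord: "\<And>i. i \<in> {1..r} \<Longrightarrow>
                   GB_ordering {p (i - 1) + 1..p i} (Es i) (label_ord {p (i - 1) + 1..p i})"
  shows "GB_graph {1..p r} (expanded_edges r E p Es)"
proof -
  interpret expansion r E p Es
    by (rule expansion.intro) (fact assms)+
  show ?thesis by (rule GB_graph_expanded)
qed

end
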